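(* Let $(Z,M,\mu)$ be a measure space with a non-trivial atomless measure $\mu$, and let $2 < a < b < \infty$. Let $\psi:(a,b)\to(0,\infty]$ be a generating function with $\inf_{p\in(a,b)}\psi(p)>0$, and let $G\psi = G\psi[a,b]$ be the associated Grand Lebesgue Space with norm $\|f\|G\psi = \sup_{p\in(a,b)} \|f\|_p/\psi(p)$. For $u\in G\psi$ put $$\theta[G\psi[a,b]](u) := \inf_{p\in(a,b)} \frac{\|u\|_p^p}{p\cdot 2^p\cdot \psi^p(p)}.$$ Then for all $x,y$ in the closed unit ball $B[G\psi[a,b]] = \{f\in G\psi: \|f\|G\psi\le 1\}$, $$\|x+y\|G\psi \le 2 - \theta[G\psi[a,b]](x-y).$$
   Context: For a measurable $f:Z\to\mathbb{R}$ and $1\le p<\infty$, $\|f\|_p = \left(\int_Z |f(z)|^p\,\mu(dz)\right)^{1/p}$. Given $1\le a<b\le\infty$ and a function $\psi:(a,b)\to(0,\infty]$ (possibly infinite at some points) with $\inf_{p\in(a,b)}\psi(p)>0$, the Grand Lebesgue Space $G\psi[a,b]$ consists of all real measurable functions $f$ on $Z$ with finite norm $\|f\|G\psi[a,b] := \sup_{p\in(a,b)} \|f\|_p/\psi(p)$, using the convention $C/\infty := 0$. *)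

theory Defs
  imports "HOL-Analysis.Analysis"
begin

definition epowr :: "ennreal \<Rightarrow> real \<Rightarrow> ennreal" where
  "epowr x p = (if x = \<infinity> then \<infinity> else ennreal (enn2real x powr p))"

definition lp_norm :: "'a measure \<Rightarrow> real \<Rightarrow> ('a \<Rightarrow> real) \<Rightarrow> ennreal" where
  "lp_norm M p f = epowr (\<integral>\<^sup>+ z. ennreal (\<bar>f z\<bar> powr p) \<partial>M) (1 / p)"

text \<open>Grand Lebesgue Space norm; ennreal division gives C / \<infinity> = 0.\<close>
definition gls_norm :: "'a measure \<Rightarrow> real \<Rightarrow> real \<Rightarrow> (real \<Rightarrow> ennreal) \<Rightarrow> ('a \<Rightarrow> real) \<Rightarrow> ennreal" where
  "gls_norm M a b \<psi> f = (SUP p\<in>{a<..<b}. lp_norm M p f / \<psi> p)"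

definition GLS :: "'a measure \<Rightarrow> real \<Rightarrow> real \<Rightarrow> (real \<Rightarrow> ennreal) \<Rightarrow> ('a \<Rightarrow> real) set" where
  "GLS M a b \<psi> = {f. f \<in> borel_measurable M \<and> gls_norm M a b \<psi> f < \<infinity>}"

definition gls_theta :: "'a measure \<Rightarrow> real \<Rightarrow> real \<Rightarrow> (real \<Rightarrow> ennreal) \<Rightarrow> ('a \<Rightarrow> real) \<Rightarrow> ennreal" where
  "gls_theta M a b \<psi> u = (INF p\<in>{a<..<b}.
      epowr (lp_norm M p u) p / (ennreal p * ennreal (2 powr p) * epowr (\<psi> p) p))"

definition is_atom :: "'a measure \<Rightarrow> 'a set \<Rightarrow> bool" where
  "is_atom M A \<longleftrightarrow> A \<in> sets M \<and> emeasure M A > 0 \<and>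
     (\<forall>B\<in>sets M. B \<subseteq> A \<longrightarrow> emeasure M B = 0 \<or> emeasure M (A - B) = 0)"

definition atomless :: "'a measure \<Rightarrow> bool" where
  "atomless M \<longleftrightarrow> (\<nexists>A. is_atom M A)"

end

theory Submission
  imports Defs
begin

text \<open>
  Fix an exponent p and suppose \<open>\<parallel>x\<parallel>\<^sub>p, \<parallel>y\<parallel>\<^sub>p \<le> c = \<psi>(p)\<close>. Clarkson's pointwise inequality
  \<open>|s + t|\<^sup>p + |s - t|\<^sup>p \<le> 2\<^sup>p\<^sup>-\<^sup>1 (|s|\<^sup>p + |t|\<^sup>p)\<close> for \<open>p \<ge> 2\<close> integrates to
  \<open>\<parallel>x + y\<parallel>\<^sub>p\<^sup>p + \<parallel>x - y\<parallel>\<^sub>p\<^sup>p \<le> (2c)\<^sup>p\<close>. Writing \<open>u, v\<close> for the two summands divided by \<open>(2c)\<^sup>p\<close>,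
  the tangent-line bound \<open>u\<^sup>1\<^sup>/\<^sup>p \<le> u/p + 1 - 1/p\<close> of the concave root gives
  \<open>\<parallel>x + y\<parallel>\<^sub>p / c + \<parallel>x - y\<parallel>\<^sub>p\<^sup>p / (p 2\<^sup>p c\<^sup>p) = 2u\<^sup>1\<^sup>/\<^sup>p + v/p \<le> 2\<close>. Bounding the second term below
  by the infimum \<open>\<theta>\<close> and taking the supremum over p proves the claim.
\<close>

lemma powr_add_le_powr_add:
  fixes A B q :: real
  assumes "q \<ge> 1" "A \<ge> 0" "B \<ge> 0"
  shows "A powr q + B powr q \<le> (A + B) powr q"
proof -
  have "C powr q \<le> C * (A + B) powr (q - 1)" if "0 \<le> C" "C \<le> A + B" for C
  proof (cases "C = 0")
    case False
    then have "C powr q = C * C powr (q - 1)"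
      using that by (simp add: powr_diff)
    also have "\<dots> \<le> C * (A + B) powr (q - 1)"
      using that assms by (intro mult_left_mono powr_mono2) auto
    finally show ?thesis .
  qed simp
  then have "A powr q + B powr q \<le> A * (A + B) powr (q - 1) + B * (A + B) powr (q - 1)"
    using assms by (intro add_mono) auto
  also have "\<dots> = (A + B) * (A + B) powr (q - 1)"
    by (simp add: algebra_simps)
  also have "\<dots> = (A + B) powr q"
    using assms by (cases "A + B = 0") (auto simp: powr_mult_base)
  finally show ?thesis .
qed

lemma powr_midpoint_le:
  fixes A B q :: real
  assumes "q \<ge> 1" "A \<ge> 0" "B \<ge> 0"
  shows "((A + B) / 2) powr q \<le> (A powr q + B powr q) / 2"
proof (cases "A > 0 \<and> B > 0")
  \<comment> \<open>powr_convex is only stated on the open half-line\<close>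
  case True
  then show ?thesis
    using convex_onD[OF powr_convex[OF assms(1)], of "1/2" A B] by (simp add: field_simps)
next
  case False
  have "(C / 2) powr q \<le> C powr q / 2" if "C \<ge> 0" for C :: real
  proof -
    have "(2::real) powr 1 \<le> 2 powr q"
      using assms(1) by (intro powr_mono) auto
    then have "C powr q / 2 powr q \<le> C powr q / 2"
      by (intro divide_left_mono) auto
    then show ?thesis
      using that by (simp add: powr_divide)
  qed
  moreover have "A = 0 \<or> B = 0"
    using False assms by auto
  ultimately show ?thesis
    using assms by auto
qed

lemma clarkson_inequality:
  fixes s t p :: real
  assumes "p \<ge> 2"
  shows "\<bar>s + t\<bar> powr p + \<bar>s - t\<bar> powr p \<le> 2 powr (p - 1) * (\<bar>s\<bar> powr p + \<bar>t\<bar> powr p)"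
proof -
  define q where "q = p / 2"
  have q: "q \<ge> 1" "p = 2 * q"
    using assms by (auto simp: q_def)
  have abs_powr: "\<bar>r\<bar> powr p = (r\<^sup>2) powr q" for r :: real
    by (simp add: q powr_powr[symmetric] flip: powr_realpow' del: powr_powr) 
  have "\<bar>s + t\<bar> powr p + \<bar>s - t\<bar> powr p \<le> ((s + t)\<^sup>2 + (s - t)\<^sup>2) powr q"
    unfolding abs_powr using q by (intro powr_add_le_powr_add) auto
  also have "(s + t)\<^sup>2 + (s - t)\<^sup>2 = 4 * ((s\<^sup>2 + t\<^sup>2) / 2)"
    by (simp add: power2_eq_square algebra_simps)
  also have "(4 * ((s\<^sup>2 + t\<^sup>2) / 2)) powr q = 4 powr q * ((s\<^sup>2 + t\<^sup>2) / 2) powr q"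
    by (rule powr_mult)
  also have "\<dots> \<le> 4 powr q * (((s\<^sup>2) powr q + (t\<^sup>2) powr q) / 2)"
    using q by (intro mult_left_mono powr_midpoint_le) auto
  also have "\<dots> = 2 powr (p - 1) * (\<bar>s\<bar> powr p + \<bar>t\<bar> powr p)"
    by (simp add: abs_powr q powr_diff powr_powr[symmetric] del: powr_powr)
  finally show ?thesis .
qed

lemma nn_integral_clarkson:
  fixes f g :: "'a \<Rightarrow> real"
  assumes "p \<ge> 2" and [measurable]: "f \<in> borel_measurable M" "g \<in> borel_measurable M"
  shows "(\<integral>\<^sup>+ z. \<bar>f z + g z\<bar> powr p \<partial>M) + (\<integral>\<^sup>+ z. \<bar>f z - g z\<bar> powr p \<partial>M)
    \<le> 2 powr (p - 1) * ((\<integral>\<^sup>+ z. \<bar>f z\<bar> powr p \<partial>M) + (\<integral>\<^sup>+ z. \<bar>g z\<bar> powr p \<partial>M))"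
proof -
  have "(\<integral>\<^sup>+ z. \<bar>f z + g z\<bar> powr p \<partial>M) + (\<integral>\<^sup>+ z. \<bar>f z - g z\<bar> powr p \<partial>M)
      = (\<integral>\<^sup>+ z. \<bar>f z + g z\<bar> powr p + \<bar>f z - g z\<bar> powr p \<partial>M)"
    by (simp add: nn_integral_add)
  also have "\<dots> \<le> (\<integral>\<^sup>+ z. 2 powr (p - 1) * (\<bar>f z\<bar> powr p + \<bar>g z\<bar> powr p) \<partial>M)"
    using clarkson_inequality[OF assms(1)] by (intro nn_integral_mono ennreal_leI) auto
  also have "\<dots> = 2 powr (p - 1) * ((\<integral>\<^sup>+ z. \<bar>f z\<bar> powr p \<partial>M) + (\<integral>\<^sup>+ z. \<bar>g z\<bar> powr p \<partial>M))"
    by (simp add: ennreal_mult nn_integral_cmult nn_integral_add)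
  finally show ?thesis .
qed

lemma epowr_lp_norm:
  assumes "p > 0"
  shows "epowr (lp_norm M p f) p = (\<integral>\<^sup>+ z. \<bar>f z\<bar> powr p \<partial>M)"
  using assms unfolding lp_norm_def epowr_def
  by (cases "\<integral>\<^sup>+ z. \<bar>f z\<bar> powr p \<partial>M" rule: ennreal_cases) (auto simp: powr_powr)

lemma lp_norm_le_iff:
  assumes "p > 0" "c \<ge> 0"
  shows "lp_norm M p f \<le> ennreal c \<longleftrightarrow> (\<integral>\<^sup>+ z. \<bar>f z\<bar> powr p \<partial>M) \<le> ennreal (c powr p)"
proof (cases "\<integral>\<^sup>+ z. \<bar>f z\<bar> powr p \<partial>M" rule: ennreal_cases)
  case (real X)
  have "X powr (1 / p) \<le> c \<longleftrightarrow> X \<le> c powr p"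
    using assms real powr_mono2[of p "X powr (1 / p)" c] powr_mono2[of "1 / p" X "c powr p"]
    by (auto simp: powr_powr)
  then show ?thesis
    using assms real by (simp add: lp_norm_def epowr_def)
qed (simp add: lp_norm_def epowr_def top_unique)

lemma le_if_divide_le_one_ennreal:
  fixes a b :: ennreal
  assumes "a / b \<le> 1"
  shows "a \<le> b"
proof (cases b rule: ennreal_cases)
  case (real r)
  show ?thesis
  proof (cases "r = 0")
    case False
    have "a = a / b * b"
      using real False by (simp add: ennreal_divide_times)
    also have "\<dots> \<le> b"
      using assms mult_right_mono[of "a / b" 1 b] by simp
    finally show ?thesis .
  qed (use assms real in \<open>auto simp: ennreal_divide_eq_top_iff top_unique split: if_splits\<close>)
qed simp

lemma enn2ereal_le_minus_if_add_le:
  assumes "g + t \<le> ennreal c" "c \<ge> 0"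
  shows "enn2ereal g \<le> ereal c - enn2ereal t"
proof -
  obtain r s where "g = ennreal r" "t = ennreal s" "r \<ge> 0" "s \<ge> 0"
    using assms by (cases g t rule: ennreal2_cases) (auto simp: top_unique)
  then show ?thesis
    using assms by (simp flip: ennreal_plus)
qed

lemma root_div_plus_div_le_two:
  fixes A B c p :: real
  assumes "p \<ge> 1" "c > 0" "A \<ge> 0" "B \<ge> 0" "A + B \<le> (2 * c) powr p"
  shows "A powr (1 / p) / c + B / (p * 2 powr p * c powr p) \<le> 2"
proof -
  define u v where "u = A / (2 * c) powr p" and "v = B / (2 * c) powr p"
  have uv: "u \<ge> 0" "v \<ge> 0" "u + v \<le> 1"
    using assms by (auto simp: u_def v_def add_divide_distrib[symmetric])
  have "u powr (1 / p) \<le> u / p + (1 - 1 / p)"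
  proof (cases "u = 0")
    case False
    then show ?thesis
      using Youngs_inequality_0[of "1 / p" "1 - 1 / p" u 1] assms uv by simp
  qed (use assms in simp)
  then have "2 * u powr (1 / p) + v / p \<le> 2"
    using assms uv by (simp add: field_simps)
  moreover have "A powr (1 / p) / c = 2 * u powr (1 / p)"
    using assms by (simp add: u_def powr_divide powr_powr)
  moreover have "B / (p * 2 powr p * c powr p) = v / p"
    using assms by (simp add: v_def powr_mult)
  ultimately show ?thesis
    by simp
qed

lemma lp_norm_add_div_plus_theta_term_le_two:
  fixes x y :: "'a \<Rightarrow> real" and \<phi> :: ennreal
  assumes p: "p > 2" and "\<phi> > 0"
    and [measurable]: "x \<in> borel_measurable M" "y \<in> borel_measurable M"
    and x: "lp_norm M p x \<le> \<phi>" and y: "lp_norm M p y \<le> \<phi>"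
  shows "lp_norm M p (\<lambda>z. x z + y z) / \<phi>
      + epowr (lp_norm M p (\<lambda>z. x z - y z)) p / (ennreal p * ennreal (2 powr p) * epowr \<phi> p) \<le> 2"
proof (cases \<phi> rule: ennreal_cases)
  case (real c)
  with \<open>\<phi> > 0\<close> have c: "\<phi> = ennreal c" "c > 0"
    by auto
  define I where "I f = (\<integral>\<^sup>+ z. \<bar>f z\<bar> powr p \<partial>M)" for f :: "'a \<Rightarrow> real"
  have "I (\<lambda>z. x z + y z) + I (\<lambda>z. x z - y z) \<le> 2 powr (p - 1) * (I x + I y)"
    unfolding I_def using p by (intro nn_integral_clarkson) auto
  also have "\<dots> \<le> 2 powr (p - 1) * (ennreal (c powr p) + ennreal (c powr p))"
    using x y p c by (intro mult_left_mono add_mono) (auto simp: I_def lp_norm_le_iff)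
  also have "\<dots> = ennreal ((2 * c) powr p)"
    using c by (simp add: powr_mult powr_diff flip: ennreal_plus ennreal_mult)
  finally have sum: "I (\<lambda>z. x z + y z) + I (\<lambda>z. x z - y z) \<le> ennreal ((2 * c) powr p)" .
  then obtain A B where A: "I (\<lambda>z. x z + y z) = ennreal A" "A \<ge> 0"
    and B: "I (\<lambda>z. x z - y z) = ennreal B" "B \<ge> 0"
    by (cases "I (\<lambda>z. x z + y z)" "I (\<lambda>z. x z - y z)" rule: ennreal2_cases) (auto simp: top_unique)
  have "lp_norm M p (\<lambda>z. x z + y z) / \<phi> = ennreal (A powr (1 / p) / c)"
    using A c by (simp add: I_def lp_norm_def epowr_def divide_ennreal)
  moreover have "epowr (lp_norm M p (\<lambda>z. x z - y z)) p / (ennreal p * ennreal (2 powr p) * epowr \<phi> p)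
      = ennreal (B / (p * 2 powr p * c powr p))"
    using B c p by (simp add: I_def epowr_lp_norm) (simp add: epowr_def divide_ennreal flip: ennreal_mult)
  moreover have "A powr (1 / p) / c + B / (p * 2 powr p * c powr p) \<le> 2"
    using sum A B c p by (intro root_div_plus_div_le_two) (auto simp flip: ennreal_plus)
  ultimately show ?thesis
    using A B c p by (simp flip: ennreal_plus) (metis ennreal_leI ennreal_numeral)
next
  case top
  then show ?thesis
    using p by (simp add: epowr_def ennreal_mult_top)
qed

lemma lp_norm_le_if_gls_norm_le_one:
  assumes "p \<in> {a<..<b}" "gls_norm M a b \<psi> f \<le> 1"
  shows "lp_norm M p f \<le> \<psi> p"
proof (rule le_if_divide_le_one_ennreal)
  have "lp_norm M p f / \<psi> p \<le> gls_norm M a b \<psi> f"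
    unfolding gls_norm_def using assms(1) by (rule SUP_upper)
  with assms(2) show "lp_norm M p f / \<psi> p \<le> 1"
    by simp
qed

theorem theorem3p1:
  fixes M :: "'a measure" and a b :: real and \<psi> :: "real \<Rightarrow> ennreal"
    and x y :: "'a \<Rightarrow> real"
  assumes "atomless M" and "emeasure M (space M) > 0"
    and "2 < a" and "a < b"
    and "\<forall>p\<in>{a<..<b}. \<psi> p > 0"
    and "(INF p\<in>{a<..<b}. \<psi> p) > 0"
    and "x \<in> GLS M a b \<psi>" and "gls_norm M a b \<psi> x \<le> 1"
    and "y \<in> GLS M a b \<psi>" and "gls_norm M a b \<psi> y \<le> 1"
  shows "enn2ereal (gls_norm M a b \<psi> (\<lambda>z. x z + y z))
           \<le> 2 - enn2ereal (gls_theta M a b \<psi> (\<lambda>z. x z - y z))"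
proof -
  define \<theta> where "\<theta> = gls_theta M a b \<psi> (\<lambda>z. x z - y z)"
  have "lp_norm M p (\<lambda>z. x z + y z) / \<psi> p + \<theta> \<le> 2" if p: "p \<in> {a<..<b}" for p
  proof -
    have "\<theta> \<le> epowr (lp_norm M p (\<lambda>z. x z - y z)) p / (ennreal p * ennreal (2 powr p) * epowr (\<psi> p) p)"
      unfolding \<theta>_def gls_theta_def using p by (rule INF_lower)
    moreover have "lp_norm M p (\<lambda>z. x z + y z) / \<psi> p
      + epowr (lp_norm M p (\<lambda>z. x z - y z)) p / (ennreal p * ennreal (2 powr p) * epowr (\<psi> p) p) \<le> 2"
      using assms p
      by (intro lp_norm_add_div_plus_theta_term_le_two lp_norm_le_if_gls_norm_le_one) (auto simp: GLS_def)
    ultimately show ?thesis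
      by (meson add_left_mono order_trans)
  qed
  then have "gls_norm M a b \<psi> (\<lambda>z. x z + y z) + \<theta> \<le> 2"
    using \<open>a < b\<close> unfolding gls_norm_def by (subst ennreal_SUP_add_left[symmetric]) (auto intro: SUP_least)
  then show ?thesis
    unfolding \<theta>_def using enn2ereal_le_minus_if_add_le[of _ _ 2] by simp
qed

end
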